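(* Let $A\in\mathbb{Z}^{d_a\times n}$, $B\in\mathbb{Z}^{d_b\times n}$ and $C\in\mathbb{Z}^{s\times n}$ be fixed. For $N\ge1$ let $([A,B],C)^{(N)}$ be the matrix with $Nn+Ns$ columns $$\begin{pmatrix} B & B & \cdots & B & & & & \\ A & & & & & & & \\ & A & & & & & & \\ & & \ddots & & & & & \\ & & & A & & & & \\ C & & & & I_s & & & \\ & C & & & & I_s & & \\ & & \ddots & & & & \ddots & \\ & & & C & & & & I_s\end{pmatrix}$$ (blank entries are zero). Then the encoding length of the Graver basis of $([A,B],C)^{(N)}$ increases only polynomially in $N$.
   Context: For an integer matrix $M$ with $k$ columns and each closed orthant $\mathbb{O}_j$ of $\mathbb{R}^k$, let $H_j$ be the unique minimal set of integer vectors generating $\{z\in\mathbb{O}_j: Mz=0\}\cap\mathbb{Z}^k$ over $\mathbb{Z}_+$. The Graver basis of $M$ is $\bigcup_j H_j\setminus\{0\}$. *)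

theory Defs
  imports Main
begin

text \<open>Integer vectors of \<open>\<int>^k\<close> are functions \<open>nat \<Rightarrow> int\<close> vanishing outside \<open>{..<k}\<close>;
  an integer matrix with m rows and k columns is a function \<open>nat \<Rightarrow> nat \<Rightarrow> int\<close>
  (row, column), only entries with row < m and column < k being relevant.
  A closed orthant of \<open>\<real>^k\<close> is given by a sign pattern \<open>\<sigma>\<close>
  (\<open>\<sigma> i\<close> true: coordinate i nonnegative, false: nonpositive).\<close>

definition kernel_orthant ::
  "nat \<Rightarrow> nat \<Rightarrow> (nat \<Rightarrow> nat \<Rightarrow> int) \<Rightarrow> (nat \<Rightarrow> bool) \<Rightarrow> (nat \<Rightarrow> int) set" where
  "kernel_orthant m k M \<sigma> =
     {z. (\<forall>i. k \<le> i \<longrightarrow> z i = 0) \<and>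
         (\<forall>i<k. if \<sigma> i then 0 \<le> z i else z i \<le> 0) \<and>
         (\<forall>r<m. (\<Sum>j<k. M r j * z j) = 0)}"

definition nat_generates :: "(nat \<Rightarrow> int) set \<Rightarrow> (nat \<Rightarrow> int) set \<Rightarrow> bool" where
  "nat_generates G S \<longleftrightarrow> G \<subseteq> S \<and>
     (\<forall>z\<in>S. \<exists>F c. finite F \<and> F \<subseteq> G \<and> z = (\<lambda>i. \<Sum>g\<in>F. int (c g) * g i))"

definition hilbert_basis :: "(nat \<Rightarrow> int) set \<Rightarrow> (nat \<Rightarrow> int) set" where
  "hilbert_basis S = (THE G. nat_generates G S \<and> (\<forall>G'. G' \<subset> G \<longrightarrow> \<not> nat_generates G' S))"

definition graver_basis ::
  "nat \<Rightarrow> nat \<Rightarrow> (nat \<Rightarrow> nat \<Rightarrow> int) \<Rightarrow> (nat \<Rightarrow> int) set" where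
  "graver_basis m k M = (\<Union>\<sigma>. hilbert_basis (kernel_orthant m k M \<sigma>)) - {(\<lambda>_. 0)}"

text \<open>Binary encoding length: bit length of |x| plus one sign bit.\<close>
fun bitlen :: "nat \<Rightarrow> nat" where
  "bitlen n = (if n = 0 then 0 else Suc (bitlen (n div 2)))"

definition enc_int :: "int \<Rightarrow> nat" where
  "enc_int x = 1 + bitlen (nat \<bar>x\<bar>)"

definition enc_vec :: "nat \<Rightarrow> (nat \<Rightarrow> int) \<Rightarrow> nat" where
  "enc_vec k z = (\<Sum>i<k. enc_int (z i))"

definition enc_set :: "nat \<Rightarrow> (nat \<Rightarrow> int) set \<Rightarrow> nat" where
  "enc_set k G = (\<Sum>z\<in>G. enc_vec k z)"

text \<open>The matrix \<open>([A,B],C)^(N)\<close>: A is da x n, B is db x n, C is s x n.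
  Rows: db rows of \<open>[B ... B 0]\<close>, then N blocks of da rows (A in block i),
  then N blocks of s rows (C in block i, identity \<open>I_s\<close> in the i-th slack block).\<close>
definition block_matrix ::
  "nat \<Rightarrow> nat \<Rightarrow> nat \<Rightarrow> nat \<Rightarrow> (nat \<Rightarrow> nat \<Rightarrow> int) \<Rightarrow> (nat \<Rightarrow> nat \<Rightarrow> int) \<Rightarrow>
   (nat \<Rightarrow> nat \<Rightarrow> int) \<Rightarrow> nat \<Rightarrow> nat \<Rightarrow> nat \<Rightarrow> int" where
  "block_matrix da db s n A B C N r c =
     (if r < db then (if c < N * n then B r (c mod n) else 0)
      else if r - db < N * da then
        (let i = (r - db) div da; a = (r - db) mod da in
          if c < N * n \<and> c div n = i then A a (c mod n) else 0)
      else
        (let r' = r - db - N * da; i = r' div s; t = r' mod s in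
          if c < N * n then (if c div n = i then C t (c mod n) else 0)
          else if c - N * n = i * s + t then 1 else 0))"

definition block_rows :: "nat \<Rightarrow> nat \<Rightarrow> nat \<Rightarrow> nat \<Rightarrow> nat" where
  "block_rows da db s N = db + N * da + N * s"

definition block_cols :: "nat \<Rightarrow> nat \<Rightarrow> nat \<Rightarrow> nat" where
  "block_cols n s N = N * n + N * s"

end

theory Submission
  imports Defs Complex_Main "HOL-Library.Function_Algebras"
begin

text \<open>
  An element of the kernel of \<open>([A,B],C)\<^sup>(\<^sup>N\<^sup>)\<close> is a tuple of \<open>N\<close> bricks, each in the kernel
  \<open>L\<close> of the fixed matrix \<open>(A 0; C I\<^sub>s)\<close>, whose \<open>B\<close>-images sum to zero. By Dickson's lemma \<open>L\<close>
  has finitely many conformally primitive elements \<open>e\<^sub>1, \<dots>, e\<^sub>K\<close>, and each brick of a Graver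
  element \<open>z\<close> is a conformal sum of them. Adding up the multiplicities over all bricks gives
  \<open>\<nu> \<in> \<nat>\<^sup>K\<close> with \<open>\<Sum>\<^sub>q \<nu>\<^sub>q B e\<^sub>q = 0\<close>, and \<open>\<nu>\<close> is a minimal nonzero such solution: a smaller one
  could be realised by part of the multiplicities and would split \<open>z\<close> conformally. The minimal
  solutions form an antichain, so again by Dickson's lemma \<open>|\<nu>| \<le> g\<close> for a \<open>g\<close> independent of
  \<open>N\<close>. Hence a Graver element is determined by distributing at most \<open>g\<close> of the \<open>e\<^sub>q\<close> over the
  \<open>N\<close> bricks: there are \<open>O(N\<^sup>g)\<close> of them, each with entries bounded independently of \<open>N\<close>.
\<close>

section \<open>Dickson's lemma\<close>

lemma nondecreasing_subseq_nat:
  fixes h :: "nat \<Rightarrow> nat"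
  obtains \<psi> :: "nat \<Rightarrow> nat" where "strict_mono \<psi>" "mono (h \<circ> \<psi>)"
proof -
  obtain f where f: "strict_mono f" "monoseq (h \<circ> f)"
    using seq_monosub by (auto simp: o_def)
  show thesis
  proof (cases "mono (h \<circ> f)")
    case True
    with f(1) that show ?thesis by blast
  next
    case False
    then have dec: "m \<le> m' \<Longrightarrow> h (f m') \<le> h (f m)" for m m'
      using f(2) unfolding monoseq_def mono_def by auto
    \<comment> \<open>a nonincreasing sequence of naturals is constant from its minimum on\<close>
    obtain n0 where n0: "\<And>m. h (f n0) \<le> h (f m)"
      using ex_has_least_nat[of "\<lambda>_. True" 0 "h \<circ> f"] by auto
    have "strict_mono (\<lambda>m. f (m + n0))"
      using f(1) by (simp add: strict_mono_def)
    moreover have "mono (h \<circ> (\<lambda>m. f (m + n0)))"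
    proof (rule monoI)
      fix m m' :: nat assume "m \<le> m'"
      have "h (f (m + n0)) \<le> h (f n0)" using dec[of n0 "m + n0"] by simp
      also have "\<dots> \<le> h (f (m' + n0))" using n0 .
      finally show "(h \<circ> (\<lambda>m. f (m + n0))) m \<le> (h \<circ> (\<lambda>m. f (m + n0))) m'" by simp
    qed
    ultimately show ?thesis using that by blast
  qed
qed

lemma dickson_subseq:
  fixes f :: "nat \<Rightarrow> nat \<Rightarrow> nat"
  shows "\<exists>\<phi> :: nat \<Rightarrow> nat. strict_mono \<phi> \<and> (\<forall>l<k. mono (\<lambda>m. f (\<phi> m) l))"
proof (induction k)
  case 0
  have "strict_mono (id :: nat \<Rightarrow> nat)" by (simp add: strict_mono_def)
  then show ?case by blast
next
  case (Suc k)
  then obtain \<phi> :: "nat \<Rightarrow> nat" where \<phi>: "strict_mono \<phi>" "\<forall>l<k. mono (\<lambda>m. f (\<phi> m) l)"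
    by blast
  obtain \<psi> :: "nat \<Rightarrow> nat" where \<psi>: "strict_mono \<psi>" "mono ((\<lambda>m. f (\<phi> m) k) \<circ> \<psi>)"
    by (rule nondecreasing_subseq_nat)
  have "\<forall>l<Suc k. mono (\<lambda>m. f ((\<phi> \<circ> \<psi>) m) l)"
  proof (intro allI impI)
    fix l assume "l < Suc k"
    show "mono (\<lambda>m. f ((\<phi> \<circ> \<psi>) m) l)"
    proof (cases "l = k")
      case True
      with \<psi>(2) show ?thesis by (simp add: o_def)
    next
      case False
      with \<open>l < Suc k\<close> \<phi>(2) have "mono (\<lambda>m. f (\<phi> m) l)" by simp
      then show ?thesis
        using \<psi>(1) by (auto simp: mono_def strict_mono_less_eq)
    qed
  qed
  moreover have "strict_mono (\<phi> \<circ> \<psi>)"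
    using \<phi>(1) \<psi>(1) by (simp add: strict_mono_def)
  ultimately show ?case
    by blast
qed

lemma finite_pointwise_antichain:
  fixes V :: "(nat \<Rightarrow> nat) set"
  assumes supp: "\<And>v l. v \<in> V \<Longrightarrow> k \<le> l \<Longrightarrow> v l = 0"
    and antichain: "\<And>v w. v \<in> V \<Longrightarrow> w \<in> V \<Longrightarrow> v \<le> w \<Longrightarrow> v = w"
  shows "finite V"
proof (rule ccontr)
  assume "infinite V"
  then obtain f :: "nat \<Rightarrow> nat \<Rightarrow> nat" where f: "inj f" "range f \<subseteq> V"
    using infinite_countable_subset by blast
  obtain \<phi> :: "nat \<Rightarrow> nat" where \<phi>: "strict_mono \<phi>" "\<forall>l<k. mono (\<lambda>m. f (\<phi> m) l)"
    using dickson_subseq[of k f] by blast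
  have in_V: "f (\<phi> 0) \<in> V" "f (\<phi> 1) \<in> V"
    using f(2) by auto
  have "f (\<phi> 0) l \<le> f (\<phi> 1) l" for l
    using \<phi>(2) supp[OF in_V(1)] by (cases "l < k") (auto simp: mono_def)
  then have "f (\<phi> 0) = f (\<phi> 1)"
    using antichain[OF in_V] by (simp add: le_fun_def)
  then have "\<phi> 0 = \<phi> 1"
    using f(1) by (simp add: inj_eq)
  with \<phi>(1) show False
    by (simp add: strict_mono_eq)
qed

section \<open>Hilbert bases of graded monoids\<close>

definition irreducibles :: "(nat \<Rightarrow> int) set \<Rightarrow> (nat \<Rightarrow> int) set" where
  "irreducibles S = {z \<in> S. z \<noteq> 0 \<and> (\<forall>a\<in>S. \<forall>b\<in>S. z = a + b \<longrightarrow> a = 0 \<or> b = 0)}"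

locale graded_monoid =
  fixes S :: "(nat \<Rightarrow> int) set" and weight :: "(nat \<Rightarrow> int) \<Rightarrow> nat"
  assumes zero_mem: "0 \<in> S"
    and add_mem: "a \<in> S \<Longrightarrow> b \<in> S \<Longrightarrow> a + b \<in> S"
    and weight_add: "a \<in> S \<Longrightarrow> b \<in> S \<Longrightarrow> weight (a + b) = weight a + weight b"
    and weight_eq_0_iff: "a \<in> S \<Longrightarrow> weight a = 0 \<longleftrightarrow> a = 0"
begin

lemma nat_combination_mem:
  assumes "finite F" "F \<subseteq> S"
  shows "(\<lambda>i. \<Sum>g\<in>F. int (c g) * g i) \<in> S"
  using assms
proof (induction F rule: finite_induct)
  case empty
  then show ?case using zero_mem by (simp add: zero_fun_def)
next
  case (insert x F)
  have "(\<lambda>i. int m * x i) \<in> S" for m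
  proof (induction m)
    case (Suc m)
    then have "x + (\<lambda>i. int m * x i) \<in> S" using insert.prems add_mem by blast
    then show ?case by (simp add: plus_fun_def algebra_simps)
  qed (use zero_mem in \<open>simp add: zero_fun_def\<close>)
  then have "(\<lambda>i. int (c x) * x i) + (\<lambda>i. \<Sum>g\<in>F. int (c g) * g i) \<in> S"
    using insert add_mem by simp
  then show ?case using insert by (simp add: plus_fun_def)
qed

lemma irreducibles_generate: "nat_generates (irreducibles S) S"
  unfolding nat_generates_def
proof (intro conjI ballI)
  show "irreducibles S \<subseteq> S" by (auto simp: irreducibles_def)
next
  fix z assume "z \<in> S"
  then show "\<exists>F c. finite F \<and> F \<subseteq> irreducibles S \<and> z = (\<lambda>i. \<Sum>g\<in>F. int (c g) * g i)"
  proof (induction "weight z" arbitrary: z rule: less_induct)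
    case less
    consider "z = 0" | "z \<in> irreducibles S"
      | a b where "a \<in> S" "b \<in> S" "z = a + b" "a \<noteq> 0" "b \<noteq> 0"
      using less.prems unfolding irreducibles_def by blast
    then show ?case
    proof cases
      case 1
      then show ?thesis by (intro exI[of _ "{}"]) (simp add: zero_fun_def)
    next
      case 2
      then show ?thesis by (intro exI[of _ "{z}"] exI[of _ "\<lambda>_. 1"]) auto
    next
      case (3 a b)
      then have "weight a < weight z" "weight b < weight z"
        using weight_add weight_eq_0_iff by auto
      then obtain Fa ca Fb cb where
        Fa: "finite Fa" "Fa \<subseteq> irreducibles S" "a = (\<lambda>i. \<Sum>g\<in>Fa. int (ca g) * g i)" and
        Fb: "finite Fb" "Fb \<subseteq> irreducibles S" "b = (\<lambda>i. \<Sum>g\<in>Fb. int (cb g) * g i)"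
        using less.hyps 3 by meson
      define c where "c g = (if g \<in> Fa then ca g else 0) + (if g \<in> Fb then cb g else 0)" for g
      have "z i = (\<Sum>g\<in>Fa \<union> Fb. int (c g) * g i)" for i
      proof -
        have "(\<Sum>g\<in>Fa \<union> Fb. int (c g) * g i) =
            (\<Sum>g\<in>Fa \<union> Fb. (if g \<in> Fa then int (ca g) * g i else 0) +
                               (if g \<in> Fb then int (cb g) * g i else 0))"
          by (rule sum.cong) (auto simp: c_def distrib_right)
        also have "\<dots> = (\<Sum>g\<in>Fa \<union> Fb. if g \<in> Fa then int (ca g) * g i else 0) +
            (\<Sum>g\<in>Fa \<union> Fb. if g \<in> Fb then int (cb g) * g i else 0)"
          by (rule sum.distrib)
        also have "\<dots> = a i + b i"
          using Fa Fb by (simp add: sum.If_cases Int_absorb1 Int_absorb2)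
        finally show ?thesis using 3 by simp
      qed
      then show ?thesis using Fa Fb by (intro exI[of _ "Fa \<union> Fb"] exI[of _ c]) auto
    qed
  qed
qed

lemma irreducibles_subset_generating:
  assumes "nat_generates G S"
  shows "irreducibles S \<subseteq> G"
proof
  fix z assume z: "z \<in> irreducibles S"
  have GS: "G \<subseteq> S" using assms unfolding nat_generates_def by blast
  obtain F c where F: "finite F" "F \<subseteq> G" "z = (\<lambda>i. \<Sum>g\<in>F. int (c g) * g i)"
    using assms z unfolding nat_generates_def irreducibles_def by blast
  have "\<exists>g0\<in>F. c g0 > 0 \<and> g0 \<noteq> 0"
  proof (rule ccontr)
    assume "\<not> ?thesis"
    then have "z = 0" unfolding F(3) zero_fun_def by (intro ext sum.neutral ballI) force
    with z show False by (simp add: irreducibles_def)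
  qed
  then obtain g0 where g0: "g0 \<in> F" "c g0 > 0" "g0 \<noteq> 0" by blast
  \<comment> \<open>split one copy of \<open>g0\<close> off the representation of \<open>z\<close>\<close>
  define r where "r = (\<lambda>i. \<Sum>g\<in>F. int ((c(g0 := c g0 - 1)) g) * g i)"
  have "r \<in> S" unfolding r_def using nat_combination_mem F GS by blast
  moreover have "z = g0 + r"
  proof
    fix i
    have "z i = int (c g0) * g0 i + (\<Sum>g\<in>F - {g0}. int (c g) * g i)"
      using F g0(1) by (simp add: sum.remove)
    moreover have "r i = int (c g0 - 1) * g0 i + (\<Sum>g\<in>F - {g0}. int (c g) * g i)"
      using F(1) g0(1) by (simp add: r_def sum.remove)
    ultimately show "z i = (g0 + r) i" using g0(2) by (simp add: of_nat_diff algebra_simps)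
  qed
  ultimately have "r = 0" using z g0 F(2) GS unfolding irreducibles_def by blast
  with \<open>z = g0 + r\<close> g0(1) F(2) show "z \<in> G" by auto
qed

lemma hilbert_basis_eq_irreducibles: "hilbert_basis S = irreducibles S"
  unfolding hilbert_basis_def
proof (rule the_equality)
  show "nat_generates (irreducibles S) S \<and> (\<forall>G'. G' \<subset> irreducibles S \<longrightarrow> \<not> nat_generates G' S)"
    using irreducibles_generate irreducibles_subset_generating by blast
next
  fix G assume "nat_generates G S \<and> (\<forall>G'. G' \<subset> G \<longrightarrow> \<not> nat_generates G' S)"
  then show "G = irreducibles S"
    using irreducibles_generate irreducibles_subset_generating by blast
qed

end

section \<open>Conformal order and Graver bases\<close>

definition sign_conformal :: "(nat \<Rightarrow> int) \<Rightarrow> (nat \<Rightarrow> int) \<Rightarrow> bool" where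
  "sign_conformal u w \<longleftrightarrow> (\<forall>i. (0 \<le> w i \<longrightarrow> 0 \<le> u i) \<and> (w i \<le> 0 \<longrightarrow> u i \<le> 0))"

text \<open>As both summands are sign-conformal to \<open>w\<close>, they are also bounded by \<open>w\<close> in absolute value,
  so these are exactly the \<open>\<sqsubseteq>\<close>-minimal nonzero elements of \<open>L\<close>.\<close>

definition conformally_primitive :: "(nat \<Rightarrow> int) set \<Rightarrow> (nat \<Rightarrow> int) \<Rightarrow> bool" where
  "conformally_primitive L w \<longleftrightarrow> w \<in> L \<and> w \<noteq> 0 \<and>
     (\<forall>u\<in>L. \<forall>v\<in>L. w = u + v \<longrightarrow> sign_conformal u w \<longrightarrow> sign_conformal v w \<longrightarrow> u = 0 \<or> v = 0)"

definition int_kernel :: "nat \<Rightarrow> nat \<Rightarrow> (nat \<Rightarrow> nat \<Rightarrow> int) \<Rightarrow> (nat \<Rightarrow> int) set" where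
  "int_kernel m k M = {z. (\<forall>i. k \<le> i \<longrightarrow> z i = 0) \<and> (\<forall>r<m. (\<Sum>j<k. M r j * z j) = 0)}"

lemma sign_conformal_refl: "sign_conformal w w"
  by (simp add: sign_conformal_def)

lemma sign_conformal_trans: "sign_conformal p u \<Longrightarrow> sign_conformal u w \<Longrightarrow> sign_conformal p w"
  unfolding sign_conformal_def by blast

lemma nat_abs_add_sign_conformal:
  assumes "sign_conformal u (u + v)" "sign_conformal v (u + v)"
  shows "nat \<bar>u i + v i\<bar> = nat \<bar>u i\<bar> + nat \<bar>v i\<bar>"
proof -
  have "(0 \<le> u i \<and> 0 \<le> v i) \<or> (u i \<le> 0 \<and> v i \<le> 0)"
    using assms unfolding sign_conformal_def by (metis linear)
  then show ?thesis by auto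
qed

lemma sign_conformal_nat_combination:
  fixes K :: nat
  assumes "\<forall>q<K. 0 < c q \<longrightarrow> sign_conformal (e q) w"
  shows "sign_conformal (\<lambda>j. \<Sum>q<K. int (c q) * e q j) w"
  unfolding sign_conformal_def
proof
  fix j
  have "0 \<le> int (c q) * e q j" if "0 \<le> w j" "q < K" for q
    using assms that unfolding sign_conformal_def by (cases "c q = 0") auto
  moreover have "int (c q) * e q j \<le> 0" if "w j \<le> 0" "q < K" for q
    using assms that unfolding sign_conformal_def by (cases "c q = 0") (auto simp: mult_nonneg_nonpos)
  ultimately show "(0 \<le> w j \<longrightarrow> 0 \<le> (\<Sum>q<K. int (c q) * e q j)) \<and>
      (w j \<le> 0 \<longrightarrow> (\<Sum>q<K. int (c q) * e q j) \<le> 0)"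
    by (auto intro: sum_nonneg sum_nonpos)
qed

lemma sign_conformal_nat_combination_nonzero:
  fixes K :: nat
  assumes "\<forall>q<K. 0 < c q \<longrightarrow> sign_conformal (e q) w" "q0 < K" "0 < c q0" "e q0 j \<noteq> 0"
  shows "(\<Sum>q<K. int (c q) * e q j) \<noteq> 0"
proof -
  let ?t = "\<lambda>q. int (c q) * e q j"
  have sign: "(0 \<le> w j \<longrightarrow> 0 \<le> ?t q) \<and> (w j \<le> 0 \<longrightarrow> ?t q \<le> 0)" if "q < K" for q
    using assms(1) that unfolding sign_conformal_def
    by (cases "c q = 0") (auto simp: mult_nonneg_nonpos)
  have "?t q0 \<noteq> 0" using assms(3,4) by simp
  show ?thesis
  proof (cases "0 \<le> w j")
    case True
    with sign[OF assms(2)] \<open>?t q0 \<noteq> 0\<close> have "0 < ?t q0" by linarith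
    with True sign assms(2) have "0 < (\<Sum>q<K. ?t q)" by (intro sum_pos2) auto
    then show ?thesis by simp
  next
    case False
    with sign[OF assms(2)] \<open>?t q0 \<noteq> 0\<close> have "0 < - ?t q0" by linarith
    with False sign assms(2) have "0 < (\<Sum>q<K. - ?t q)" by (intro sum_pos2) auto
    then show ?thesis by (simp add: sum_negf)
  qed
qed

lemma kernel_orthant_graded_monoid:
  "graded_monoid (kernel_orthant m k M \<sigma>) (\<lambda>z. \<Sum>i<k. nat \<bar>z i\<bar>)"
proof
  show "0 \<in> kernel_orthant m k M \<sigma>" by (simp add: kernel_orthant_def)
next
  fix a b assume a: "a \<in> kernel_orthant m k M \<sigma>" and b: "b \<in> kernel_orthant m k M \<sigma>"
  then show "a + b \<in> kernel_orthant m k M \<sigma>"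
    by (auto simp: kernel_orthant_def distrib_left sum.distrib split: if_splits)
      (metis add_nonneg_nonneg add_nonpos_nonpos)+
  have "nat \<bar>a i + b i\<bar> = nat \<bar>a i\<bar> + nat \<bar>b i\<bar>" if "i < k" for i
  proof -
    from that a b have "(0 \<le> a i \<and> 0 \<le> b i) \<or> (a i \<le> 0 \<and> b i \<le> 0)"
      by (auto simp: kernel_orthant_def split: if_splits)
    then show ?thesis by auto
  qed
  then show "(\<Sum>i<k. nat \<bar>(a + b) i\<bar>) = (\<Sum>i<k. nat \<bar>a i\<bar>) + (\<Sum>i<k. nat \<bar>b i\<bar>)"
    by (simp add: sum.distrib[symmetric])
next
  fix a assume a: "a \<in> kernel_orthant m k M \<sigma>"
  show "(\<Sum>i<k. nat \<bar>a i\<bar>) = 0 \<longleftrightarrow> a = 0"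
  proof
    assume "(\<Sum>i<k. nat \<bar>a i\<bar>) = 0"
    then have "\<forall>i<k. a i = 0" by simp
    with a show "a = 0" by (auto simp: kernel_orthant_def fun_eq_iff) (metis not_le)
  qed simp
qed

lemma graver_basis_conformally_primitive:
  assumes "z \<in> graver_basis m k M"
  shows "conformally_primitive (int_kernel m k M) z"
proof -
  obtain \<sigma> where z: "z \<in> irreducibles (kernel_orthant m k M \<sigma>)"
    using assms unfolding graver_basis_def
      graded_monoid.hilbert_basis_eq_irreducibles[OF kernel_orthant_graded_monoid] by blast
  let ?S = "kernel_orthant m k M \<sigma>"
  have "z \<in> ?S" "z \<noteq> 0" using z by (auto simp: irreducibles_def)
  have orthant: "u \<in> ?S" if "u \<in> int_kernel m k M" "sign_conformal u z" for u
    using that \<open>z \<in> ?S\<close> unfolding kernel_orthant_def int_kernel_def sign_conformal_def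
    by (auto split: if_splits)
  show ?thesis
    unfolding conformally_primitive_def
  proof (intro conjI ballI impI)
    show "z \<in> int_kernel m k M" using \<open>z \<in> ?S\<close> by (simp add: kernel_orthant_def int_kernel_def)
    fix u v assume "u \<in> int_kernel m k M" "v \<in> int_kernel m k M" "z = u + v"
      "sign_conformal u z" "sign_conformal v z"
    then show "u = 0 \<or> v = 0" using z orthant unfolding irreducibles_def by blast
  qed (fact \<open>z \<noteq> 0\<close>)
qed

section \<open>Conformally primitive elements of integer lattices\<close>

locale int_lattice =
  fixes L :: "(nat \<Rightarrow> int) set" and k :: nat
  assumes support: "w \<in> L \<Longrightarrow> k \<le> i \<Longrightarrow> w i = 0"
    and zero_mem: "0 \<in> L"
    and add_mem: "u \<in> L \<Longrightarrow> v \<in> L \<Longrightarrow> u + v \<in> L"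
    and diff_mem: "u \<in> L \<Longrightarrow> v \<in> L \<Longrightarrow> u - v \<in> L"
begin

lemma scaled_mem:
  fixes c :: int
  assumes "w \<in> L"
  shows "(\<lambda>j. c * w j) \<in> L"
proof -
  have nat_scaled: "(\<lambda>j. int n * w j) \<in> L" for n
  proof (induction n)
    case 0
    then show ?case using zero_mem by (simp add: zero_fun_def)
  next
    case (Suc n)
    then have "(\<lambda>j. int n * w j) + w \<in> L" using assms add_mem by blast
    then show ?case by (simp add: plus_fun_def algebra_simps)
  qed
  then have "0 - (\<lambda>j. int n * w j) \<in> L" for n using zero_mem diff_mem by blast
  then have "(\<lambda>j. - int n * w j) \<in> L" for n by (simp add: fun_diff_def)
  with nat_scaled show ?thesis by (cases c rule: int_cases2) auto
qed

lemma lincomb_mem: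
  fixes K :: nat
  assumes "\<forall>q<K. e q \<in> L"
  shows "(\<lambda>j. \<Sum>q<K. c q * e q j) \<in> L"
  using assms
proof (induction K)
  case 0
  then show ?case using zero_mem by (simp add: zero_fun_def)
next
  case (Suc K)
  then have "(\<lambda>j. \<Sum>q<K. c q * e q j) + (\<lambda>j. c K * e K j) \<in> L"
    using add_mem scaled_mem by simp
  then show ?case by (simp add: plus_fun_def)
qed

text \<open>Interleaving positive and negative parts turns the conformal order on \<open>L\<close> into the
  componentwise order on \<open>\<nat>\<^sup>2\<^sup>k\<close>.\<close>

definition sign_split :: "(nat \<Rightarrow> int) \<Rightarrow> nat \<Rightarrow> nat" where
  "sign_split w l =
     (if l < 2 * k then (if even l then nat (w (l div 2)) else nat (- w (l div 2))) else 0)"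

lemma sign_split_le:
  assumes "sign_split p \<le> sign_split q" "i < k"
  shows "(0 \<le> q i \<longrightarrow> 0 \<le> p i \<and> p i \<le> q i) \<and> (q i \<le> 0 \<longrightarrow> p i \<le> 0 \<and> q i \<le> p i)"
proof -
  have "sign_split p (2 * i) \<le> sign_split q (2 * i)" "sign_split p (2 * i + 1) \<le> sign_split q (2 * i + 1)"
    using assms(1) by (simp_all add: le_fun_def)
  then have "nat (p i) \<le> nat (q i)" "nat (- p i) \<le> nat (- q i)"
    using assms(2) by (auto simp: sign_split_def)
  then show ?thesis by auto
qed

lemma primitive_eq_if_sign_split_le:
  assumes p: "conformally_primitive L p" and q: "conformally_primitive L q"
    and le: "sign_split p \<le> sign_split q"
  shows "p = q"
proof -
  have "p \<in> L" "q \<in> L" using p q by (simp_all add: conformally_primitive_def)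
  have "(0 \<le> q i \<longrightarrow> 0 \<le> p i \<and> p i \<le> q i) \<and> (q i \<le> 0 \<longrightarrow> p i \<le> 0 \<and> q i \<le> p i)" for i
    using sign_split_le[OF le, of i] support[OF \<open>p \<in> L\<close>, of i] support[OF \<open>q \<in> L\<close>, of i]
    by (cases "i < k") auto
  then have "sign_conformal p q" "sign_conformal (q - p) q"
    by (auto simp: sign_conformal_def)
  moreover have "q = p + (q - p)" by simp
  ultimately have "p = 0 \<or> q - p = 0"
    using q diff_mem[OF \<open>q \<in> L\<close> \<open>p \<in> L\<close>] \<open>p \<in> L\<close> unfolding conformally_primitive_def by blast
  then show "p = q" using p by (auto simp: conformally_primitive_def)
qed

lemma finite_primitive: "finite {w. conformally_primitive L w}"
proof -
  let ?P = "{w. conformally_primitive L w}"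
  have "inj_on sign_split ?P"
    by (rule inj_onI) (metis mem_Collect_eq order_refl primitive_eq_if_sign_split_le)
  moreover have "finite (sign_split ` ?P)"
  proof (rule finite_pointwise_antichain[of _ "2 * k"])
    show "v l = 0" if "v \<in> sign_split ` ?P" "2 * k \<le> l" for v l
      using that by (auto simp: sign_split_def)
    show "v = w" if "v \<in> sign_split ` ?P" "w \<in> sign_split ` ?P" "v \<le> w" for v w
    proof -
      from that obtain p q where "conformally_primitive L p" "conformally_primitive L q"
        "v = sign_split p" "w = sign_split q" by auto
      with \<open>v \<le> w\<close> show ?thesis using primitive_eq_if_sign_split_le by metis
    qed
  qed
  ultimately show ?thesis using finite_imageD by blast
qed

lemma weight_pos:
  assumes "x \<in> L" "x \<noteq> 0"
  shows "0 < (\<Sum>i<k. nat \<bar>x i\<bar>)"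
proof -
  obtain i where "x i \<noteq> 0" using assms(2) by (auto simp: fun_eq_iff)
  moreover from this have "i < k" using support[OF assms(1)] by (cases "i < k") auto
  ultimately show ?thesis by (auto intro: sum_pos2)
qed

lemma conformal_decomposition:
  assumes es: "set es = {w. conformally_primitive L w}"
  shows "w \<in> L \<Longrightarrow> \<exists>m. w = (\<lambda>j. \<Sum>q<length es. int (m q) * (es ! q) j) \<and>
          (\<forall>q<length es. 0 < m q \<longrightarrow> sign_conformal (es ! q) w)"
proof (induction "\<Sum>i<k. nat \<bar>w i\<bar>" arbitrary: w rule: less_induct)
  case less
  consider "w = 0" | "conformally_primitive L w"
    | u v where "u \<in> L" "v \<in> L" "w = u + v" "sign_conformal u w" "sign_conformal v w"
      "u \<noteq> 0" "v \<noteq> 0"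
    using less.prems unfolding conformally_primitive_def by blast
  then show ?case
  proof cases
    case 1
    then show ?thesis by (intro exI[of _ "\<lambda>_. 0"]) (simp add: zero_fun_def)
  next
    case 2
    then obtain q0 where q0: "q0 < length es" "w = es ! q0"
      using es by (metis in_set_conv_nth mem_Collect_eq)
    have "(\<Sum>q<length es. int (if q = q0 then 1 else 0) * (es ! q) j) =
        (\<Sum>q<length es. if q = q0 then (es ! q) j else 0)" for j
      by (rule sum.cong) auto
    then have "(\<Sum>q<length es. int (if q = q0 then 1 else 0) * (es ! q) j) = w j" for j
      using q0 by simp
    then show ?thesis
      using q0 sign_conformal_refl by (intro exI[of _ "\<lambda>q. if q = q0 then 1 else 0"]) auto
  next
    case (3 u v)
    have "nat \<bar>w i\<bar> = nat \<bar>u i\<bar> + nat \<bar>v i\<bar>" for i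
      using 3(3-5) by (simp add: nat_abs_add_sign_conformal)
    then have lt: "(\<Sum>i<k. nat \<bar>u i\<bar>) < (\<Sum>i<k. nat \<bar>w i\<bar>)" "(\<Sum>i<k. nat \<bar>v i\<bar>) < (\<Sum>i<k. nat \<bar>w i\<bar>)"
      using weight_pos[OF 3(1,6)] weight_pos[OF 3(2,7)] by (simp_all add: sum.distrib)
    obtain mu where
      mu: "u = (\<lambda>j. \<Sum>q<length es. int (mu q) * (es ! q) j)"
        "\<forall>q<length es. 0 < mu q \<longrightarrow> sign_conformal (es ! q) u"
      using less.hyps[OF lt(1) 3(1)] by blast
    obtain mv where
      mv: "v = (\<lambda>j. \<Sum>q<length es. int (mv q) * (es ! q) j)"
        "\<forall>q<length es. 0 < mv q \<longrightarrow> sign_conformal (es ! q) v"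
      using less.hyps[OF lt(2) 3(2)] by blast
    show ?thesis
    proof (intro exI[of _ "\<lambda>q. mu q + mv q"] conjI allI impI)
      show "w = (\<lambda>j. \<Sum>q<length es. int (mu q + mv q) * (es ! q) j)"
        using 3(3) mu(1) mv(1) by (simp add: plus_fun_def distrib_right sum.distrib)
      fix q assume "q < length es" "0 < mu q + mv q"
      then show "sign_conformal (es ! q) w"
        using mu(2) mv(2) 3(4,5) sign_conformal_trans by (meson add_gr_0)
    qed
  qed
qed

end

lemma int_lattice_int_kernel: "int_lattice (int_kernel m k M) k"
  by unfold_locales
    (auto simp: int_kernel_def right_diff_distrib distrib_left sum.distrib sum_subtractf)

section \<open>Bricks of the block matrix\<close>

lemma sum_lessThan_add:
  "(\<Sum>c<(a::nat) + b. f c) = (\<Sum>c<a. f c) + (\<Sum>t<b. f (a + t) :: 'a::comm_monoid_add)"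
  by (induction b) (simp_all add: add.assoc)

lemma sum_lessThan_mult:
  "(\<Sum>c<(N::nat) * n. f c) = (\<Sum>i<N. \<Sum>j<n. f (i * n + j) :: 'a::comm_monoid_add)"
proof (induction N)
  case (Suc N)
  have "(\<Sum>c<Suc N * n. f c) = (\<Sum>c<N * n + n. f c)" by (simp add: add.commute)
  with Suc show ?case by (simp add: sum_lessThan_add)
qed simp

lemma block_index:
  assumes "(j::nat) < n"
  shows "(i * n + j) div n = i" "(i * n + j) mod n = j"
  using assms by simp_all

lemma block_index_less:
  assumes "i < (N::nat)" "j < n"
  shows "i * n + j < N * n"
proof -
  have "i * n + j < Suc i * n" using assms(2) by simp
  also have "\<dots> \<le> N * n" using assms(1) by (intro mult_right_mono) auto
  finally show ?thesis .
qed

lemma block_decompose: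
  assumes "(x::nat) < N * d"
  obtains i a where "i < N" "a < d" "x = i * d + a"
proof -
  have "0 < d" using assms by (cases d) auto
  then have "x = (x div d) * d + x mod d" "x mod d < d" "x div d < N"
    using assms by (auto simp: less_mult_imp_div_less)
  then show thesis using that by blast
qed

lemma block_matrix_row_sum:
  "(\<Sum>c<N * n + N * s. block_matrix da db s n A B C N r c * z c) =
    (\<Sum>i<N. \<Sum>j<n. block_matrix da db s n A B C N r (i * n + j) * z (i * n + j)) +
    (\<Sum>i<N. \<Sum>t<s. block_matrix da db s n A B C N r (N * n + (i * s + t)) * z (N * n + (i * s + t)))"
  by (simp add: sum_lessThan_add sum_lessThan_mult)

lemma block_matrix_B_row:
  assumes "r < db"
  shows "(\<Sum>c<N * n + N * s. block_matrix da db s n A B C N r c * z c) =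
    (\<Sum>i<N. \<Sum>j<n. B r j * z (i * n + j))"
proof -
  let ?M = "block_matrix da db s n A B C N"
  have "?M r (i * n + j) = B r j" if "i < N" "j < n" for i j
    using assms that block_index_less block_index by (simp add: block_matrix_def)
  moreover have "?M r (N * n + (i * s + t)) = 0" for i t
    using assms by (simp add: block_matrix_def)
  ultimately show ?thesis unfolding block_matrix_row_sum by simp
qed

lemma block_matrix_A_row:
  assumes "i0 < N" "a < da"
  shows "(\<Sum>c<N * n + N * s. block_matrix da db s n A B C N (db + (i0 * da + a)) c * z c) =
    (\<Sum>j<n. A a j * z (i0 * n + j))"
proof -
  let ?M = "block_matrix da db s n A B C N"
  have row: "i0 * da + a < N * da" "(i0 * da + a) div da = i0" "(i0 * da + a) mod da = a"
    using assms block_index_less block_index by auto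
  have "?M (db + (i0 * da + a)) (i * n + j) = (if i = i0 then A a j else 0)"
    if "i < N" "j < n" for i j
    using row that block_index_less block_index by (auto simp: block_matrix_def Let_def)
  moreover have "?M (db + (i0 * da + a)) (N * n + (i * s + t)) = 0" for i t
    using row by (simp add: block_matrix_def Let_def)
  ultimately have "(\<Sum>c<N * n + N * s. ?M (db + (i0 * da + a)) c * z c) =
      (\<Sum>i<N. \<Sum>j<n. (if i = i0 then A a j else 0) * z (i * n + j))"
    unfolding block_matrix_row_sum by simp
  also have "\<dots> = (\<Sum>i<N. if i = i0 then (\<Sum>j<n. A a j * z (i * n + j)) else 0)"
    by (rule sum.cong) auto
  also have "\<dots> = (\<Sum>j<n. A a j * z (i0 * n + j))" using assms(1) by simp
  finally show ?thesis .
qed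

lemma block_matrix_C_row:
  assumes "i0 < N" "t0 < s"
  shows "(\<Sum>c<N * n + N * s. block_matrix da db s n A B C N (db + N * da + (i0 * s + t0)) c * z c) =
     (\<Sum>j<n. C t0 j * z (i0 * n + j)) + z (N * n + (i0 * s + t0))"
proof -
  let ?M = "block_matrix da db s n A B C N" and ?r = "db + N * da + (i0 * s + t0)"
  have if_mult: "(if P then 1 else 0) * x = (if P then x else 0)" for P and x :: int
    by simp
  have row: "(i0 * s + t0) div s = i0" "(i0 * s + t0) mod s = t0"
    using assms(2) block_index by auto
  have "?M ?r (i * n + j) = (if i = i0 then C t0 j else 0)" if "i < N" "j < n" for i j
    using row that block_index_less block_index by (auto simp: block_matrix_def Let_def)
  moreover have "?M ?r (N * n + (i * s + t)) = (if i = i0 \<and> t = t0 then 1 else 0)"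
    if "t < s" for i t
  proof -
    have "i * s + t = i0 * s + t0 \<longleftrightarrow> i = i0 \<and> t = t0"
      using that assms(2) block_index by metis
    then show ?thesis using row by (auto simp: block_matrix_def Let_def)
  qed
  ultimately have "(\<Sum>c<N * n + N * s. ?M ?r c * z c) =
      (\<Sum>i<N. \<Sum>j<n. (if i = i0 then C t0 j else 0) * z (i * n + j)) +
      (\<Sum>i<N. \<Sum>t<s. (if i = i0 \<and> t = t0 then 1 else 0) * z (N * n + (i * s + t)))"
    unfolding block_matrix_row_sum by simp
  also have "\<dots> = (\<Sum>i<N. if i = i0 then (\<Sum>j<n. C t0 j * z (i * n + j)) else 0) +
      (\<Sum>i<N. if i = i0 then (\<Sum>t<s. if t = t0 then z (N * n + (i * s + t)) else 0) else 0)"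
    using if_mult by (intro arg_cong2[where f="(+)"] sum.cong) auto
  also have "\<dots> = (\<Sum>j<n. C t0 j * z (i0 * n + j)) + z (N * n + (i0 * s + t0))"
    using assms by simp
  finally show ?thesis .
qed

lemma all_block_rows_iff:
  fixes db da s N :: nat
  shows "(\<forall>r<db + N * da + N * s. P r) \<longleftrightarrow>
     (\<forall>r<db. P r) \<and> (\<forall>i<N. \<forall>a<da. P (db + (i * da + a))) \<and>
     (\<forall>i<N. \<forall>t<s. P (db + N * da + (i * s + t)))"
proof
  assume all: "\<forall>r<db + N * da + N * s. P r"
  have "db + (i * da + a) < db + N * da + N * s" if "i < N" "a < da" for i a
    using block_index_less[OF that] by simp
  moreover have "db + N * da + (i * s + t) < db + N * da + N * s" if "i < N" "t < s" for i t
    using block_index_less[OF that] by simp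
  ultimately show "(\<forall>r<db. P r) \<and> (\<forall>i<N. \<forall>a<da. P (db + (i * da + a))) \<and>
      (\<forall>i<N. \<forall>t<s. P (db + N * da + (i * s + t)))"
    using all by (auto simp del: add_less_cancel_left)
next
  assume parts: "(\<forall>r<db. P r) \<and> (\<forall>i<N. \<forall>a<da. P (db + (i * da + a))) \<and>
      (\<forall>i<N. \<forall>t<s. P (db + N * da + (i * s + t)))"
  show "\<forall>r<db + N * da + N * s. P r"
  proof (intro allI impI)
    fix r assume "r < db + N * da + N * s"
    then consider "r < db" | "db \<le> r" "r - db < N * da"
      | "db + N * da \<le> r" "r - db - N * da < N * s"
      by linarith
    then show "P r"
    proof cases
      case 2
      then obtain i a where "i < N" "a < da" "r - db = i * da + a" by (metis block_decompose)
      moreover from 2 have "r = db + (r - db)" by simp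
      ultimately show ?thesis using parts by metis
    next
      case 3
      then obtain i t where "i < N" "t < s" "r - db - N * da = i * s + t" by (metis block_decompose)
      moreover from 3 have "r = db + N * da + (r - db - N * da)" by simp
      ultimately show ?thesis using parts by metis
    qed (use parts in blast)
  qed
qed

definition brick_kernel ::
  "nat \<Rightarrow> nat \<Rightarrow> nat \<Rightarrow> (nat \<Rightarrow> nat \<Rightarrow> int) \<Rightarrow> (nat \<Rightarrow> nat \<Rightarrow> int) \<Rightarrow> (nat \<Rightarrow> int) set" where
  "brick_kernel da s n A C = {w. (\<forall>j. n + s \<le> j \<longrightarrow> w j = 0) \<and> (\<forall>a<da. (\<Sum>j<n. A a j * w j) = 0) \<and>
     (\<forall>t<s. (\<Sum>j<n. C t j * w j) + w (n + t) = 0)}"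

lemma int_lattice_brick_kernel: "int_lattice (brick_kernel da s n A C) (n + s)"
proof
  fix u v assume u: "u \<in> brick_kernel da s n A C" and v: "v \<in> brick_kernel da s n A C"
  have e1: "(\<Sum>j<n. C t j * (u j + v j)) + (u (n + t) + v (n + t)) =
     ((\<Sum>j<n. C t j * u j) + u (n + t)) + ((\<Sum>j<n. C t j * v j) + v (n + t))" for t
    by (simp add: distrib_left sum.distrib)
  have e2: "(\<Sum>j<n. C t j * (u j - v j)) + (u (n + t) - v (n + t)) =
     ((\<Sum>j<n. C t j * u j) + u (n + t)) - ((\<Sum>j<n. C t j * v j) + v (n + t))" for t
    by (simp add: right_diff_distrib sum_subtractf)
  have e3: "(\<Sum>j<n. A a j * (u j + v j)) = (\<Sum>j<n. A a j * u j) + (\<Sum>j<n. A a j * v j)" for a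
    by (simp add: distrib_left sum.distrib)
  have e4: "(\<Sum>j<n. A a j * (u j - v j)) = (\<Sum>j<n. A a j * u j) - (\<Sum>j<n. A a j * v j)" for a
    by (simp add: right_diff_distrib sum_subtractf)
  show "u + v \<in> brick_kernel da s n A C" "u - v \<in> brick_kernel da s n A C"
    using u v unfolding brick_kernel_def plus_fun_def fun_diff_def mem_Collect_eq e1 e2 e3 e4
    by simp_all
qed (auto simp: brick_kernel_def)

definition brick :: "nat \<Rightarrow> nat \<Rightarrow> nat \<Rightarrow> (nat \<Rightarrow> int) \<Rightarrow> nat \<Rightarrow> nat \<Rightarrow> int" where
  "brick n s N z i =
     (\<lambda>j. if j < n then z (i * n + j) else if j < n + s then z (N * n + (i * s + (j - n))) else 0)"

definition unbrick :: "nat \<Rightarrow> nat \<Rightarrow> nat \<Rightarrow> (nat \<Rightarrow> nat \<Rightarrow> int) \<Rightarrow> nat \<Rightarrow> int" where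
  "unbrick n s N b c =
     (if c < N * n then b (c div n) (c mod n)
      else if c < N * n + N * s then b ((c - N * n) div s) (n + (c - N * n) mod s) else 0)"

lemma unbrick_eq_0: "N * n + N * s \<le> c \<Longrightarrow> unbrick n s N b c = 0"
  by (simp add: unbrick_def)

lemma unbrick_coordinate:
  assumes "c < N * n + N * s"
  obtains i j where "i < N" "j < n + s" "\<And>b. unbrick n s N b c = b i j"
proof (cases "c < N * n")
  case True
  then obtain i j where "i < N" "j < n" "c = i * n + j" by (rule block_decompose)
  then show thesis using that[of i j] by (simp add: unbrick_def block_index_less block_index)
next
  case False
  with assms have "c - N * n < N * s" by linarith
  then obtain i t where "i < N" "t < s" "c - N * n = i * s + t" by (rule block_decompose)
  then show thesis using that[of i "n + t"] False assms by (simp add: unbrick_def)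
qed

lemma brick_unbrick:
  assumes "i < N" "\<forall>j. n + s \<le> j \<longrightarrow> b i j = 0"
  shows "brick n s N (unbrick n s N b) i = b i"
proof
  fix j
  consider "j < n" | "n \<le> j" "j < n + s" | "n + s \<le> j" by linarith
  then show "brick n s N (unbrick n s N b) i j = b i j"
  proof cases
    case 1
    then show ?thesis
      using assms block_index_less[of i N j n] block_index[OF 1] by (simp add: brick_def unbrick_def)
  next
    case 2
    then obtain t where t: "j = n + t" "t < s" by (metis add_diff_inverse_nat add_less_cancel_left not_less)
    then have "i * s + t < N * s" using assms(1) block_index_less by blast
    then show ?thesis using t block_index[OF t(2)] by (simp add: brick_def unbrick_def)
  next
    case 3
    then show ?thesis using assms by (simp add: brick_def)
  qed
qed

lemma unbrick_brick:
  assumes "\<forall>c. N * n + N * s \<le> c \<longrightarrow> z c = 0"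
  shows "unbrick n s N (brick n s N z) = z"
proof
  fix c
  consider "c < N * n" | "N * n \<le> c" "c < N * n + N * s" | "N * n + N * s \<le> c" by linarith
  then show "unbrick n s N (brick n s N z) c = z c"
  proof cases
    case 1
    then have "c mod n < n" by (cases n) auto
    with 1 show ?thesis by (simp add: unbrick_def brick_def)
  next
    case 2
    then have "(c - N * n) mod s < s" by (cases s) auto
    moreover have "N * n + ((c - N * n) div s * s + (c - N * n) mod s) = c" using 2 by simp
    ultimately show ?thesis using 2 by (simp add: unbrick_def brick_def)
  next
    case 3
    then show ?thesis using assms by (simp add: unbrick_def)
  qed
qed

lemma unbrick_add: "unbrick n s N (b1 + b2) = unbrick n s N b1 + unbrick n s N b2"
  by (simp add: fun_eq_iff unbrick_def)

lemma unbrick_cong: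
  assumes "\<forall>i<N. b1 i = b2 i"
  shows "unbrick n s N b1 = unbrick n s N b2"
proof
  fix c
  show "unbrick n s N b1 c = unbrick n s N b2 c"
  proof (cases "c < N * n + N * s")
    case True
    then obtain i j where "i < N" "j < n + s" "\<And>b. unbrick n s N b c = b i j"
      using unbrick_coordinate by metis
    then show ?thesis using assms by simp
  qed (simp add: unbrick_eq_0)
qed

lemma unbrick_zero: "unbrick n s N 0 = 0"
  by (simp add: fun_eq_iff unbrick_def)

lemma sign_conformal_unbrick:
  assumes "\<forall>i<N. sign_conformal (b i) (w i)"
  shows "sign_conformal (unbrick n s N b) (unbrick n s N w)"
  unfolding sign_conformal_def
proof
  fix c
  show "(0 \<le> unbrick n s N w c \<longrightarrow> 0 \<le> unbrick n s N b c) \<and>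
      (unbrick n s N w c \<le> 0 \<longrightarrow> unbrick n s N b c \<le> 0)"
  proof (cases "c < N * n + N * s")
    case True
    then obtain i j where "i < N" "j < n + s" "\<And>b. unbrick n s N b c = b i j"
      using unbrick_coordinate by metis
    then show ?thesis using assms unfolding sign_conformal_def by simp
  qed (simp add: unbrick_eq_0)
qed

abbreviation block_kernel ::
  "nat \<Rightarrow> nat \<Rightarrow> nat \<Rightarrow> nat \<Rightarrow> (nat \<Rightarrow> nat \<Rightarrow> int) \<Rightarrow> (nat \<Rightarrow> nat \<Rightarrow> int) \<Rightarrow>
    (nat \<Rightarrow> nat \<Rightarrow> int) \<Rightarrow> nat \<Rightarrow> (nat \<Rightarrow> int) set" where
  "block_kernel da db s n A B C N \<equiv>
     int_kernel (block_rows da db s N) (block_cols n s N) (block_matrix da db s n A B C N)"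

lemma int_kernel_block_matrix_iff:
  "z \<in> block_kernel da db s n A B C N \<longleftrightarrow>
   (\<forall>c. N * n + N * s \<le> c \<longrightarrow> z c = 0) \<and> (\<forall>i<N. brick n s N z i \<in> brick_kernel da s n A C) \<and>
   (\<forall>r<db. (\<Sum>i<N. \<Sum>j<n. B r j * brick n s N z i j) = 0)"
proof -
  let ?row = "\<lambda>r. (\<Sum>c<N * n + N * s. block_matrix da db s n A B C N r c * z c)"
  have B_rows: "(\<forall>r<db. ?row r = 0) \<longleftrightarrow> (\<forall>r<db. (\<Sum>i<N. \<Sum>j<n. B r j * brick n s N z i j) = 0)"
    by (simp add: block_matrix_B_row brick_def)
  have A_rows: "(\<forall>i<N. \<forall>a<da. ?row (db + (i * da + a)) = 0) \<longleftrightarrow>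
      (\<forall>i<N. \<forall>a<da. (\<Sum>j<n. A a j * brick n s N z i j) = 0)"
    by (simp add: block_matrix_A_row brick_def)
  have C_rows: "(\<forall>i<N. \<forall>t<s. ?row (db + N * da + (i * s + t)) = 0) \<longleftrightarrow>
      (\<forall>i<N. \<forall>t<s. (\<Sum>j<n. C t j * brick n s N z i j) + brick n s N z i (n + t) = 0)"
    by (simp add: block_matrix_C_row brick_def)
  have "(\<forall>i<N. brick n s N z i \<in> brick_kernel da s n A C) \<longleftrightarrow>
      (\<forall>i<N. \<forall>a<da. (\<Sum>j<n. A a j * brick n s N z i j) = 0) \<and>
      (\<forall>i<N. \<forall>t<s. (\<Sum>j<n. C t j * brick n s N z i j) + brick n s N z i (n + t) = 0)"
    by (auto simp: brick_kernel_def brick_def)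
  then show ?thesis
    unfolding int_kernel_def block_rows_def block_cols_def mem_Collect_eq all_block_rows_iff
      B_rows A_rows C_rows
    by blast
qed

lemma unbrick_mem_int_kernel:
  assumes "\<forall>i<N. b i \<in> brick_kernel da s n A C" "\<forall>r<db. (\<Sum>i<N. \<Sum>j<n. B r j * b i j) = 0"
  shows "unbrick n s N b \<in> block_kernel da db s n A B C N"
proof -
  have "\<forall>i<N. brick n s N (unbrick n s N b) i = b i"
    using assms(1) brick_unbrick by (auto simp: brick_kernel_def)
  with assms show ?thesis
    unfolding int_kernel_block_matrix_iff using unbrick_eq_0 by simp
qed

section \<open>Minimal nonnegative integer solutions\<close>

definition nat_solutions :: "nat \<Rightarrow> nat \<Rightarrow> (nat \<Rightarrow> nat \<Rightarrow> int) \<Rightarrow> (nat \<Rightarrow> nat) set" where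
  "nat_solutions d K b = {\<nu>. (\<forall>q. K \<le> q \<longrightarrow> \<nu> q = 0) \<and> (\<forall>r<d. (\<Sum>q<K. int (\<nu> q) * b r q) = 0)}"

definition minimal_nonzero :: "(nat \<Rightarrow> nat) set \<Rightarrow> (nat \<Rightarrow> nat) \<Rightarrow> bool" where
  "minimal_nonzero Z \<nu> \<longleftrightarrow> \<nu> \<in> Z \<and> \<nu> \<noteq> 0 \<and> (\<forall>\<nu>'\<in>Z. \<nu>' \<noteq> 0 \<longrightarrow> \<nu>' \<le> \<nu> \<longrightarrow> \<nu>' = \<nu>)"

lemma minimal_nonzero_nat_solutions_bounded:
  obtains g where "\<And>\<nu>. minimal_nonzero (nat_solutions d K b) \<nu> \<Longrightarrow> (\<Sum>q<K. \<nu> q) \<le> g"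
proof -
  let ?V = "{\<nu>. minimal_nonzero (nat_solutions d K b) \<nu>}"
  have "finite ?V"
    by (rule finite_pointwise_antichain[of _ K])
      (auto simp: minimal_nonzero_def nat_solutions_def)
  then have "(\<Sum>q<K. \<nu> q) \<le> (\<Sum>\<nu>\<in>?V. \<Sum>q<K. \<nu> q)" if "\<nu> \<in> ?V" for \<nu>
    using that by (intro member_le_sum) auto
  then show thesis using that by blast
qed

lemma nat_sum_split_below:
  fixes f :: "nat \<Rightarrow> nat"
  assumes "t \<le> (\<Sum>i<N. f i)"
  shows "\<exists>f'. f' \<le> f \<and> (\<Sum>i<N. f' i) = t"
  using assms
proof (induction N arbitrary: t)
  case 0
  then show ?case by (intro exI[of _ 0]) (simp add: le_fun_def)
next
  case (Suc N)
  show ?case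
  proof (cases "t \<le> (\<Sum>i<N. f i)")
    case True
    then obtain f' where "f' \<le> f" "(\<Sum>i<N. f' i) = t" using Suc.IH by blast
    then show ?thesis
      by (intro exI[of _ "f'(N := 0)"]) (auto simp: le_fun_def)
  next
    case False
    with Suc.prems show ?thesis
      by (intro exI[of _ "f(N := t - (\<Sum>i<N. f i))"]) (auto simp: le_fun_def)
  qed
qed

lemma sub_multiplicities:
  fixes \<mu> :: "nat \<Rightarrow> nat \<Rightarrow> nat"
  assumes "\<nu>' \<le> (\<lambda>q. \<Sum>i<N. \<mu> i q)" "\<forall>q. K \<le> q \<longrightarrow> \<nu>' q = 0"
  obtains \<mu>' where "\<mu>' \<le> \<mu>" "\<forall>i q. N \<le> i \<or> K \<le> q \<longrightarrow> \<mu>' i q = 0" "\<And>q. (\<Sum>i<N. \<mu>' i q) = \<nu>' q"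
proof -
  have "\<forall>q. \<exists>f. f \<le> (\<lambda>i. \<mu> i q) \<and> (\<Sum>i<N. f i) = \<nu>' q"
    using assms(1) nat_sum_split_below by (simp add: le_fun_def)
  then obtain f where f: "\<And>q. f q \<le> (\<lambda>i. \<mu> i q)" "\<And>q. (\<Sum>i<N. f q i) = \<nu>' q"
    by metis
  define \<mu>' where "\<mu>' i q = (if i < N \<and> q < K then f q i else 0)" for i q
  have "\<mu>' \<le> \<mu>" using f(1) by (simp add: le_fun_def \<mu>'_def)
  moreover have "(\<Sum>i<N. \<mu>' i q) = \<nu>' q" for q
    using f(2)[of q] assms(2) by (cases "q < K") (simp_all add: \<mu>'_def)
  moreover have "\<forall>i q. N \<le> i \<or> K \<le> q \<longrightarrow> \<mu>' i q = 0" by (simp add: \<mu>'_def)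
  ultimately show thesis by (intro that)
qed

section \<open>Combinations of primitive bricks\<close>

definition brick_comb :: "(nat \<Rightarrow> int) list \<Rightarrow> (nat \<Rightarrow> nat \<Rightarrow> nat) \<Rightarrow> nat \<Rightarrow> nat \<Rightarrow> int" where
  "brick_comb es \<mu> i = (\<lambda>j. \<Sum>q<length es. int (\<mu> i q) * (es ! q) j)"

definition B_image :: "nat \<Rightarrow> (nat \<Rightarrow> nat \<Rightarrow> int) \<Rightarrow> (nat \<Rightarrow> int) list \<Rightarrow> nat \<Rightarrow> nat \<Rightarrow> int" where
  "B_image n B es r q = (\<Sum>j<n. B r j * (es ! q) j)"

lemma B_sum_brick_comb:
  "(\<Sum>i<N. \<Sum>j<n. B r j * brick_comb es \<mu> i j) =
   (\<Sum>q<length es. int (\<Sum>i<N. \<mu> i q) * B_image n B es r q)"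
proof -
  have "(\<Sum>i<N. \<Sum>j<n. B r j * brick_comb es \<mu> i j) =
      (\<Sum>i<N. \<Sum>q<length es. int (\<mu> i q) * B_image n B es r q)"
    by (simp add: brick_comb_def B_image_def sum_distrib_left sum_distrib_right
        sum.swap[of _ "{..<n}"] algebra_simps)
  also have "\<dots> = (\<Sum>q<length es. int (\<Sum>i<N. \<mu> i q) * B_image n B es r q)"
    by (subst sum.swap) (simp add: sum_distrib_right)
  finally show ?thesis .
qed

lemma brick_comb_add: "brick_comb es (\<mu>1 + \<mu>2) = brick_comb es \<mu>1 + brick_comb es \<mu>2"
  by (simp add: fun_eq_iff brick_comb_def distrib_right sum.distrib)

lemma unbrick_brick_comb_diff:
  assumes "\<mu>' \<le> \<mu>"
  shows "unbrick n s N (brick_comb es \<mu>) - unbrick n s N (brick_comb es \<mu>') =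
    unbrick n s N (brick_comb es (\<mu> - \<mu>'))"
proof -
  have "\<mu>' + (\<mu> - \<mu>') = \<mu>" using assms by (simp add: le_fun_def fun_eq_iff)
  then have "unbrick n s N (brick_comb es \<mu>') + unbrick n s N (brick_comb es (\<mu> - \<mu>')) =
      unbrick n s N (brick_comb es \<mu>)"
    by (simp flip: brick_comb_add unbrick_add)
  then show ?thesis by (simp add: algebra_simps)
qed

definition conformal_multiplicities ::
  "nat \<Rightarrow> nat \<Rightarrow> nat \<Rightarrow> (nat \<Rightarrow> int) list \<Rightarrow> (nat \<Rightarrow> nat \<Rightarrow> nat) \<Rightarrow> (nat \<Rightarrow> int) \<Rightarrow> bool" where
  "conformal_multiplicities n s N es \<mu> z \<longleftrightarrow>
     (\<forall>i<N. \<forall>q<length es. 0 < \<mu> i q \<longrightarrow> sign_conformal (es ! q) (brick n s N z i))"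

lemma conformal_multiplicities_mono:
  "conformal_multiplicities n s N es \<mu> z \<Longrightarrow> \<mu>' \<le> \<mu> \<Longrightarrow> conformal_multiplicities n s N es \<mu>' z"
  unfolding conformal_multiplicities_def le_fun_def by (meson less_le_trans)

definition multiplicity_vectors :: "nat \<Rightarrow> nat \<Rightarrow> nat \<Rightarrow> (nat \<Rightarrow> nat \<Rightarrow> nat) set" where
  "multiplicity_vectors N K g =
     {\<mu>. (\<forall>i q. N \<le> i \<or> K \<le> q \<longrightarrow> \<mu> i q = 0) \<and> (\<Sum>i<N. \<Sum>q<K. \<mu> i q) \<le> g}"

lemma exists_list_with_counts:
  fixes f :: "'a \<Rightarrow> nat"
  assumes "finite D"
  shows "\<exists>xs. set xs \<subseteq> D \<and> (\<forall>p\<in>D. count_list xs p = f p) \<and> length xs = sum f D"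
  using assms
proof (induction D rule: finite_induct)
  case (insert x D)
  then obtain xs where xs: "set xs \<subseteq> D" "\<forall>p\<in>D. count_list xs p = f p" "length xs = sum f D"
    by blast
  have "count_list (replicate m x) p = (if p = x then m else 0)" for m p
    by (induction m) auto
  moreover have "x \<notin> set xs" using xs(1) insert(2) by blast
  ultimately show ?case using xs insert
    by (intro exI[of _ "replicate (f x) x @ xs"]) (auto simp: count_list_0_iff)
qed simp

lemma multiplicity_vectors_subset_counts:
  "multiplicity_vectors N K g \<subseteq>
     (\<lambda>xs i q. count_list xs (i, q)) ` {xs. set xs \<subseteq> {..<N} \<times> {..<K} \<and> length xs \<le> g}"
proof
  fix \<mu> assume \<mu>: "\<mu> \<in> multiplicity_vectors N K g"
  obtain xs where xs: "set xs \<subseteq> {..<N} \<times> {..<K}"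
      "\<forall>p\<in>{..<N} \<times> {..<K}. count_list xs p = \<mu> (fst p) (snd p)"
      "length xs = (\<Sum>p\<in>{..<N} \<times> {..<K}. \<mu> (fst p) (snd p))"
    using exists_list_with_counts[of "{..<N} \<times> {..<K}" "\<lambda>p. \<mu> (fst p) (snd p)"] by blast
  have "length xs \<le> g"
    using xs(3) \<mu> by (simp add: multiplicity_vectors_def sum.cartesian_product case_prod_beta)
  moreover have "\<mu> = (\<lambda>i q. count_list xs (i, q))"
  proof (intro ext)
    fix i q
    show "\<mu> i q = count_list xs (i, q)"
    proof (cases "i < N \<and> q < K")
      case False
      then have "(i, q) \<notin> set xs" using xs(1) by auto
      with False \<mu> show ?thesis by (auto simp: multiplicity_vectors_def count_list_0_iff)
    qed (use xs(2) in auto)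
  qed
  ultimately show "\<mu> \<in> (\<lambda>xs i q. count_list xs (i, q)) `
      {xs. set xs \<subseteq> {..<N} \<times> {..<K} \<and> length xs \<le> g}"
    using xs(1) by blast
qed

lemma sum_powers_le:
  fixes a g :: nat
  shows "(\<Sum>m\<le>g. a ^ m) \<le> (g + 1) * (a + 1) ^ g"
proof -
  have "(\<Sum>m\<le>g. a ^ m) \<le> (\<Sum>m\<le>g. (a + 1) ^ g)"
  proof (rule sum_mono)
    fix m assume "m \<in> {..g}"
    then have "a ^ m \<le> (a + 1) ^ m" "(a + 1) ^ m \<le> (a + 1) ^ g"
      by (auto intro: power_mono power_increasing)
    then show "a ^ m \<le> (a + 1) ^ g" by linarith
  qed
  then show ?thesis by simp
qed

lemma card_multiplicity_vectors:
  "finite (multiplicity_vectors N K g) \<and> card (multiplicity_vectors N K g) \<le> (g + 1) * (N * K + 1) ^ g"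
proof -
  let ?D = "{..<N} \<times> {..<K}"
  let ?L = "{xs. set xs \<subseteq> ?D \<and> length xs \<le> g}"
  have fin: "finite ?L" by (simp add: finite_lists_length_le)
  then have "finite (multiplicity_vectors N K g)"
    using multiplicity_vectors_subset_counts by (rule finite_surj)
  moreover have "card (multiplicity_vectors N K g) \<le> card ?L"
    using card_mono[OF finite_imageI[OF fin] multiplicity_vectors_subset_counts] card_image_le[OF fin]
    by (rule order_trans)
  moreover have "card ?L = (\<Sum>m\<le>g. (N * K) ^ m)"
    using card_lists_length_le[of ?D g] by (simp add: card_cartesian_product)
  ultimately show ?thesis using sum_powers_le[where a="N * K" and g=g] by linarith
qed

lemma abs_unbrick_brick_comb_le:
  assumes "\<mu> \<in> multiplicity_vectors N (length es) g"
    and E: "\<forall>q<length es. \<forall>j<n + s. \<bar>(es ! q) j\<bar> \<le> int E"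
  shows "\<bar>unbrick n s N (brick_comb es \<mu>) c\<bar> \<le> int (g * E)"
proof (cases "c < N * n + N * s")
  case True
  then obtain i j where ij: "i < N" "j < n + s" "\<And>b. unbrick n s N b c = b i j"
    using unbrick_coordinate by metis
  have "(\<Sum>q<length es. \<mu> i q) \<le> (\<Sum>i<N. \<Sum>q<length es. \<mu> i q)"
    using ij(1) by (intro member_le_sum) auto
  then have row: "(\<Sum>q<length es. \<mu> i q) \<le> g"
    using assms(1) by (simp add: multiplicity_vectors_def)
  have "\<bar>unbrick n s N (brick_comb es \<mu>) c\<bar> \<le> (\<Sum>q<length es. \<bar>int (\<mu> i q) * (es ! q) j\<bar>)"
    unfolding ij(3) brick_comb_def by (rule sum_abs)
  also have "\<dots> \<le> (\<Sum>q<length es. int (\<mu> i q) * int E)"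
    using E ij(2) by (intro sum_mono) (simp add: abs_mult mult_left_mono)
  also have "\<dots> = int ((\<Sum>q<length es. \<mu> i q) * E)" by (simp add: sum_distrib_right)
  also have "\<dots> \<le> int (g * E)" using row by (simp only: of_nat_le_iff mult_right_mono)
  finally show ?thesis .
qed (use assms in \<open>auto simp: unbrick_eq_0 multiplicity_vectors_def\<close>)

section \<open>Encoding length\<close>

lemma bitlen_le: "bitlen m \<le> m"
proof (induction m rule: bitlen.induct)
  case (1 m)
  show ?case
  proof (cases "m = 0")
    case False
    then have "bitlen m = Suc (bitlen (m div 2))" by simp
    also have "\<dots> \<le> Suc (m div 2)" using 1 False by (simp del: bitlen.simps)
    also have "\<dots> \<le> m" using False by linarith
    finally show ?thesis .
  qed simp
qed

lemma enc_int_le: "enc_int x \<le> 1 + nat \<bar>x\<bar>"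
  unfolding enc_int_def using bitlen_le[of "nat \<bar>x\<bar>"] by (simp del: bitlen.simps)

lemma enc_vec_le:
  assumes "\<forall>c<k. \<bar>z c\<bar> \<le> int b"
  shows "enc_vec k z \<le> k * (1 + b)"
proof -
  have "enc_int (z c) \<le> 1 + b" if "c < k" for c
  proof -
    have "nat \<bar>z c\<bar> \<le> b" using assms that by (simp add: nat_le_iff)
    then show ?thesis using enc_int_le[of "z c"] by linarith
  qed
  then have "enc_vec k z \<le> (\<Sum>c<k. 1 + b)"
    unfolding enc_vec_def by (intro sum_mono) simp
  then show ?thesis by simp
qed

lemma enc_set_le:
  assumes "G \<subseteq> V" "finite V" "\<forall>z\<in>V. enc_vec k z \<le> b"
  shows "enc_set k G \<le> card V * b"
proof -
  have "enc_set k G \<le> enc_set k V"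
    unfolding enc_set_def using assms(1,2) by (intro sum_mono2) auto
  also have "\<dots> \<le> card V * b"
    unfolding enc_set_def using assms(3) sum_bounded_above[of V "enc_vec k" b] by simp
  finally show ?thesis .
qed

lemma finite_entries_bounded:
  fixes es :: "(nat \<Rightarrow> int) list"
  obtains E :: nat where "\<forall>q<length es. \<forall>j<k. \<bar>(es ! q) j\<bar> \<le> int E"
proof
  show "\<forall>q<length es. \<forall>j<k. \<bar>(es ! q) j\<bar> \<le> int (\<Sum>q<length es. \<Sum>j<k. nat \<bar>(es ! q) j\<bar>)"
  proof (intro allI impI)
    fix q j assume "q < length es" "j < k"
    then have "nat \<bar>(es ! q) j\<bar> \<le> (\<Sum>q<length es. \<Sum>j<k. nat \<bar>(es ! q) j\<bar>)"
      using member_le_sum[of j "{..<k}" "\<lambda>j. nat \<bar>(es ! q) j\<bar>"]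
        member_le_sum[of q "{..<length es}" "\<lambda>q. \<Sum>j<k. nat \<bar>(es ! q) j\<bar>"] by simp
    then show "\<bar>(es ! q) j\<bar> \<le> int (\<Sum>q<length es. \<Sum>j<k. nat \<bar>(es ! q) j\<bar>)" by linarith
  qed
qed

section \<open>Graver elements of the block matrix\<close>

context
  fixes da db s n :: nat and A B C :: "nat \<Rightarrow> nat \<Rightarrow> int" and es :: "(nat \<Rightarrow> int) list"
    and N :: nat
  assumes es: "set es = {w. conformally_primitive (brick_kernel da s n A C) w}"
begin

lemma nth_primitive:
  assumes "q < length es"
  shows "es ! q \<in> brick_kernel da s n A C" "es ! q \<noteq> 0"
  using nth_mem[OF assms] es by (auto simp: conformally_primitive_def)

lemma brick_comb_mem: "brick_comb es \<mu> i \<in> brick_kernel da s n A C"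
  unfolding brick_comb_def
  by (rule int_lattice.lincomb_mem[OF int_lattice_brick_kernel, where e="\<lambda>q. es ! q"])
    (simp add: nth_primitive)

lemma brick_unbrick_brick_comb:
  "i < N \<Longrightarrow> brick n s N (unbrick n s N (brick_comb es \<mu>)) i = brick_comb es \<mu> i"
  using brick_comb_mem by (intro brick_unbrick) (auto simp: brick_kernel_def)

lemma unbrick_brick_comb_mem_int_kernel:
  assumes "(\<lambda>q. \<Sum>i<N. \<mu> i q) \<in> nat_solutions db (length es) (B_image n B es)"
  shows "unbrick n s N (brick_comb es \<mu>) \<in> block_kernel da db s n A B C N"
  using assms brick_comb_mem
  by (intro unbrick_mem_int_kernel) (auto simp: B_sum_brick_comb nat_solutions_def)

lemma brick_decomposition:
  assumes "z \<in> block_kernel da db s n A B C N"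
  obtains \<mu> where "\<forall>i q. N \<le> i \<or> length es \<le> q \<longrightarrow> \<mu> i q = 0"
    "z = unbrick n s N (brick_comb es \<mu>)" "conformal_multiplicities n s N es \<mu> z"
proof -
  have bricks: "\<forall>i<N. brick n s N z i \<in> brick_kernel da s n A C"
    and z_supp: "\<forall>c. N * n + N * s \<le> c \<longrightarrow> z c = 0"
    using assms unfolding int_kernel_block_matrix_iff by blast+
  have "\<forall>i. \<exists>m. i < N \<longrightarrow> brick n s N z i = (\<lambda>j. \<Sum>q<length es. int (m q) * (es ! q) j) \<and>
      (\<forall>q<length es. 0 < m q \<longrightarrow> sign_conformal (es ! q) (brick n s N z i))"
    using int_lattice.conformal_decomposition[OF int_lattice_brick_kernel es] bricks by blast
  then obtain m where m: "\<forall>i<N. brick n s N z i = (\<lambda>j. \<Sum>q<length es. int (m i q) * (es ! q) j) \<and>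
      (\<forall>q<length es. 0 < m i q \<longrightarrow> sign_conformal (es ! q) (brick n s N z i))"
    by metis
  define \<mu> where "\<mu> i q = (if i < N \<and> q < length es then m i q else 0)" for i q
  have "brick n s N z i = brick_comb es \<mu> i" if "i < N" for i
    using m that by (auto simp: brick_comb_def \<mu>_def intro!: sum.cong)
  then have "z = unbrick n s N (brick_comb es \<mu>)"
    using unbrick_brick[OF z_supp] unbrick_cong by metis
  moreover have "conformal_multiplicities n s N es \<mu> z"
  proof -
    from m have "\<forall>i<N. \<forall>q<length es. 0 < m i q \<longrightarrow> sign_conformal (es ! q) (brick n s N z i)"
      by blast
    then show ?thesis by (simp add: conformal_multiplicities_def \<mu>_def)
  qed
  moreover have "\<forall>i q. N \<le> i \<or> length es \<le> q \<longrightarrow> \<mu> i q = 0"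
    by (simp add: \<mu>_def)
  ultimately show thesis by (intro that)
qed

lemma sign_conformal_unbrick_brick_comb:
  assumes "z \<in> block_kernel da db s n A B C N" "conformal_multiplicities n s N es \<mu> z"
  shows "sign_conformal (unbrick n s N (brick_comb es \<mu>)) z"
proof -
  have "\<forall>i<N. sign_conformal (brick_comb es \<mu> i) (brick n s N z i)"
    using assms(2) unfolding conformal_multiplicities_def brick_comb_def
    by (blast intro: sign_conformal_nat_combination)
  then have "sign_conformal (unbrick n s N (brick_comb es \<mu>)) (unbrick n s N (brick n s N z))"
    by (rule sign_conformal_unbrick)
  moreover have "unbrick n s N (brick n s N z) = z"
    using assms(1) unfolding int_kernel_block_matrix_iff by (blast intro: unbrick_brick)
  ultimately show ?thesis by simp
qed

lemma unbrick_brick_comb_nonzero: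
  assumes "conformal_multiplicities n s N es \<mu> z" "q < length es" "(\<Sum>i<N. \<mu> i q) \<noteq> 0"
  shows "unbrick n s N (brick_comb es \<mu>) \<noteq> 0"
proof
  assume zero: "unbrick n s N (brick_comb es \<mu>) = 0"
  obtain i where "i < N" "0 < \<mu> i q" using assms(3) by (auto simp: sum_eq_0_iff)
  obtain j where "(es ! q) j \<noteq> 0" using nth_primitive(2)[OF assms(2)] by (auto simp: fun_eq_iff)
  have "\<forall>q'<length es. 0 < \<mu> i q' \<longrightarrow> sign_conformal (es ! q') (brick n s N z i)"
    using assms(1) \<open>i < N\<close> by (simp add: conformal_multiplicities_def)
  then have "brick_comb es \<mu> i j \<noteq> 0"
    unfolding brick_comb_def using assms(2) \<open>0 < \<mu> i q\<close> \<open>(es ! q) j \<noteq> 0\<close>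
    by (simp add: sign_conformal_nat_combination_nonzero)
  moreover have "brick_comb es \<mu> i = brick n s N 0 i"
    using brick_unbrick_brick_comb[OF \<open>i < N\<close>, where \<mu>=\<mu>] zero by simp
  ultimately show False by (auto simp: brick_def zero_fun_def split: if_splits)
qed

text \<open>A solution \<open>\<nu>'\<close> strictly between \<open>0\<close> and the total multiplicities of \<open>z\<close> is realised by a
  part \<open>\<mu>' \<le> \<mu>\<close>, which splits \<open>z\<close> into two nonzero conformal kernel elements.\<close>

lemma primitive_multiplicities_minimal:
  assumes prim: "conformally_primitive (block_kernel da db s n A B C N) z"
    and \<mu>: "z = unbrick n s N (brick_comb es \<mu>)" "conformal_multiplicities n s N es \<mu> z"
      "\<forall>q. length es \<le> q \<longrightarrow> (\<Sum>i<N. \<mu> i q) = 0"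
    and \<nu>': "\<nu>' \<in> nat_solutions db (length es) (B_image n B es)" "\<nu>' \<noteq> 0"
      "\<nu>' \<le> (\<lambda>q. \<Sum>i<N. \<mu> i q)"
  shows "\<nu>' = (\<lambda>q. \<Sum>i<N. \<mu> i q)"
proof (rule ccontr)
  assume ne: "\<nu>' \<noteq> (\<lambda>q. \<Sum>i<N. \<mu> i q)"
  have zK: "z \<in> block_kernel da db s n A B C N" using prim by (simp add: conformally_primitive_def)
  have \<nu>'_supp: "\<forall>q. length es \<le> q \<longrightarrow> \<nu>' q = 0" using \<nu>'(1) by (simp add: nat_solutions_def)
  obtain \<mu>' where \<mu>': "\<mu>' \<le> \<mu>" "\<And>q. (\<Sum>i<N. \<mu>' i q) = \<nu>' q"
    using sub_multiplicities[OF \<nu>'(3) \<nu>'_supp] by metis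
  define u where "u = unbrick n s N (brick_comb es \<mu>')"
  have uK: "u \<in> block_kernel da db s n A B C N"
    unfolding u_def using \<nu>'(1) \<mu>'(2) by (intro unbrick_brick_comb_mem_int_kernel) simp
  have rest: "z - u = unbrick n s N (brick_comb es (\<mu> - \<mu>'))"
    unfolding \<mu>(1) u_def using \<mu>'(1) by (rule unbrick_brick_comb_diff)
  have mult: "conformal_multiplicities n s N es \<mu>' z" "conformal_multiplicities n s N es (\<mu> - \<mu>') z"
    using \<mu>(2) \<mu>'(1) conformal_multiplicities_mono by (auto simp: le_fun_def)
  have conformal_u: "sign_conformal u z"
    unfolding u_def by (rule sign_conformal_unbrick_brick_comb[OF zK mult(1)])
  have conformal_rest: "sign_conformal (z - u) z"
    unfolding rest by (rule sign_conformal_unbrick_brick_comb[OF zK mult(2)])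
  have "u \<noteq> 0"
  proof -
    obtain q where q: "\<nu>' q \<noteq> 0" using \<nu>'(2) by (auto simp: fun_eq_iff)
    then have "q < length es" using \<nu>'_supp by (cases "q < length es") auto
    with q show ?thesis
      unfolding u_def by (intro unbrick_brick_comb_nonzero[OF mult(1)]) (simp_all add: \<mu>'(2))
  qed
  have "z - u \<noteq> 0"
  proof -
    obtain q where "\<nu>' q \<noteq> (\<Sum>i<N. \<mu> i q)" using ne by auto
    with le_funD[OF \<nu>'(3), of q] have q: "\<nu>' q < (\<Sum>i<N. \<mu> i q)" by simp
    then have "q < length es" using \<mu>(3) by (cases "q < length es") auto
    have "(\<Sum>i<N. (\<mu> - \<mu>') i q) = (\<Sum>i<N. \<mu> i q) - \<nu>' q"
      using \<mu>'(1) by (simp add: sum_subtractf_nat le_fun_def flip: \<mu>'(2))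
    with q have "(\<Sum>i<N. (\<mu> - \<mu>') i q) \<noteq> 0" by linarith
    then show ?thesis
      unfolding rest by (rule unbrick_brick_comb_nonzero[OF mult(2) \<open>q < length es\<close>])
  qed
  have "z - u \<in> block_kernel da db s n A B C N"
    using int_lattice.diff_mem[OF int_lattice_int_kernel zK uK] .
  moreover have "z = u + (z - u)" by simp
  ultimately have "u = 0 \<or> z - u = 0"
    using prim uK conformal_u conformal_rest unfolding conformally_primitive_def by blast
  with \<open>u \<noteq> 0\<close> \<open>z - u \<noteq> 0\<close> show False by blast
qed

lemma graver_basis_multiplicities:
  assumes "z \<in> graver_basis (block_rows da db s N) (block_cols n s N) (block_matrix da db s n A B C N)"
  obtains \<mu> where "\<forall>i q. N \<le> i \<or> length es \<le> q \<longrightarrow> \<mu> i q = 0"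
    "z = unbrick n s N (brick_comb es \<mu>)"
    "minimal_nonzero (nat_solutions db (length es) (B_image n B es)) (\<lambda>q. \<Sum>i<N. \<mu> i q)"
proof -
  have prim: "conformally_primitive (block_kernel da db s n A B C N) z"
    using assms by (rule graver_basis_conformally_primitive)
  then have zK: "z \<in> block_kernel da db s n A B C N" and "z \<noteq> 0"
    by (simp_all add: conformally_primitive_def)
  obtain \<mu> where \<mu>: "\<forall>i q. N \<le> i \<or> length es \<le> q \<longrightarrow> \<mu> i q = 0"
    "z = unbrick n s N (brick_comb es \<mu>)" "conformal_multiplicities n s N es \<mu> z"
    using brick_decomposition[OF zK] by blast
  let ?\<nu> = "\<lambda>q. \<Sum>i<N. \<mu> i q"
  have "\<forall>i<N. brick n s N z i = brick_comb es \<mu> i"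
    using brick_unbrick_brick_comb \<mu>(2) by simp
  then have "(\<Sum>i<N. \<Sum>j<n. B r j * brick_comb es \<mu> i j) = 0" if "r < db" for r
    using zK that unfolding int_kernel_block_matrix_iff by simp
  then have "?\<nu> \<in> nat_solutions db (length es) (B_image n B es)"
    using \<mu>(1) by (simp add: nat_solutions_def B_sum_brick_comb)
  moreover have "?\<nu> \<noteq> 0"
  proof
    assume "?\<nu> = 0"
    then have "\<forall>i<N. brick_comb es \<mu> i = 0"
      by (auto simp: fun_eq_iff brick_comb_def sum_eq_0_iff)
    then have "z = 0" using \<mu>(2) unbrick_cong unbrick_zero by (metis zero_fun_def)
    with \<open>z \<noteq> 0\<close> show False ..
  qed
  moreover have "\<nu>' = ?\<nu>"
    if "\<nu>' \<in> nat_solutions db (length es) (B_image n B es)" "\<nu>' \<noteq> 0" "\<nu>' \<le> ?\<nu>" for \<nu>'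
    using primitive_multiplicities_minimal[OF prim \<mu>(2,3) _ that] \<mu>(1) by simp
  ultimately have "minimal_nonzero (nat_solutions db (length es) (B_image n B es)) ?\<nu>"
    unfolding minimal_nonzero_def by blast
  then show thesis by (rule that[OF \<mu>(1,2)])
qed

lemma graver_basis_subset_multiplicity_vectors:
  assumes g: "\<And>\<nu>. minimal_nonzero (nat_solutions db (length es) (B_image n B es)) \<nu> \<Longrightarrow>
      (\<Sum>q<length es. \<nu> q) \<le> g"
  shows "graver_basis (block_rows da db s N) (block_cols n s N) (block_matrix da db s n A B C N) \<subseteq>
    (\<lambda>\<mu>. unbrick n s N (brick_comb es \<mu>)) ` multiplicity_vectors N (length es) g"
proof
  fix z
  assume "z \<in> graver_basis (block_rows da db s N) (block_cols n s N) (block_matrix da db s n A B C N)"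
  then obtain \<mu> where \<mu>: "\<forall>i q. N \<le> i \<or> length es \<le> q \<longrightarrow> \<mu> i q = 0"
    "z = unbrick n s N (brick_comb es \<mu>)"
    "minimal_nonzero (nat_solutions db (length es) (B_image n B es)) (\<lambda>q. \<Sum>i<N. \<mu> i q)"
    by (rule graver_basis_multiplicities)
  have "(\<Sum>i<N. \<Sum>q<length es. \<mu> i q) \<le> g"
    using g[OF \<mu>(3)] by (simp add: sum.swap[of _ "{..<N}"])
  with \<mu>(1,2) show "z \<in> (\<lambda>\<mu>. unbrick n s N (brick_comb es \<mu>)) ` multiplicity_vectors N (length es) g"
    by (auto simp: multiplicity_vectors_def)
qed

lemma graver_basis_enc_set_le:
  assumes g: "\<And>\<nu>. minimal_nonzero (nat_solutions db (length es) (B_image n B es)) \<nu> \<Longrightarrow>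
      (\<Sum>q<length es. \<nu> q) \<le> g"
    and E: "\<forall>q<length es. \<forall>j<n + s. \<bar>(es ! q) j\<bar> \<le> int E"
    and "1 \<le> N"
  defines "G \<equiv> graver_basis (block_rows da db s N) (block_cols n s N) (block_matrix da db s n A B C N)"
  shows "finite G \<and>
    enc_set (block_cols n s N) G \<le> (g + 1) * (length es + 1) ^ g * (n + s) * (1 + g * E) * N ^ (g + 1)"
proof -
  let ?V = "(\<lambda>\<mu>. unbrick n s N (brick_comb es \<mu>)) ` multiplicity_vectors N (length es) g"
  have sub: "G \<subseteq> ?V" unfolding G_def by (rule graver_basis_subset_multiplicity_vectors[OF g])
  have fin: "finite ?V" and card: "card ?V \<le> (g + 1) * (N * length es + 1) ^ g"
    using card_multiplicity_vectors[of N "length es" g] card_image_le le_trans by blast+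
  have "(N * length es + 1) ^ g \<le> (N * (length es + 1)) ^ g"
    using \<open>1 \<le> N\<close> by (intro power_mono) simp_all
  with card have "card ?V \<le> (g + 1) * (N * (length es + 1)) ^ g"
    by (meson le_trans mult_le_mono2)
  also have "\<dots> = (g + 1) * (length es + 1) ^ g * N ^ g"
    by (simp only: power_mult_distrib mult.assoc mult.commute mult.left_commute)
  finally have card_le: "card ?V \<le> (g + 1) * (length es + 1) ^ g * N ^ g" .
  have cols: "block_cols n s N = (n + s) * N" by (simp add: block_cols_def algebra_simps)
  have "\<forall>z\<in>?V. enc_vec (block_cols n s N) z \<le> block_cols n s N * (1 + g * E)"
    using abs_unbrick_brick_comb_le[OF _ E] by (blast intro: enc_vec_le)
  then have "enc_set (block_cols n s N) G \<le> card ?V * ((n + s) * N * (1 + g * E))"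
    unfolding cols by (rule enc_set_le[OF sub fin])
  also have "\<dots> \<le> (g + 1) * (length es + 1) ^ g * N ^ g * ((n + s) * N * (1 + g * E))"
    using card_le by (rule mult_right_mono) simp
  also have "\<dots> = (g + 1) * (length es + 1) ^ g * (n + s) * (1 + g * E) * N ^ (g + 1)"
    by (simp only: power_add power_one_right mult.assoc mult.commute mult.left_commute)
  finally show ?thesis using sub fin finite_subset by blast
qed

end

theorem lemma2:
  fixes A B C :: "nat \<Rightarrow> nat \<Rightarrow> int" and da db s n :: nat
  shows "\<exists>c k :: nat. \<forall>N\<ge>1.
     finite (graver_basis (block_rows da db s N) (block_cols n s N) (block_matrix da db s n A B C N))
   \<and> enc_set (block_cols n s N)
       (graver_basis (block_rows da db s N) (block_cols n s N) (block_matrix da db s n A B C N))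
     \<le> c * N ^ k"
proof -
  obtain es where es: "set es = {w. conformally_primitive (brick_kernel da s n A C) w}"
    using int_lattice.finite_primitive[OF int_lattice_brick_kernel] finite_list by blast
  obtain g where g: "\<And>\<nu>. minimal_nonzero (nat_solutions db (length es) (B_image n B es)) \<nu> \<Longrightarrow>
      (\<Sum>q<length es. \<nu> q) \<le> g"
    using minimal_nonzero_nat_solutions_bounded[of db "length es" "B_image n B es"] by blast
  obtain E where E: "\<forall>q<length es. \<forall>j<n + s. \<bar>(es ! q) j\<bar> \<le> int E"
    by (rule finite_entries_bounded)
  show ?thesis
    using graver_basis_enc_set_le[OF es g E] by blast
qed

end
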